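(* Let $U$ be a nonempty set and let $\pi,\sigma$ be partitions of $U$. Let $G(\sigma\Rightarrow\pi)$ be the simple undirected graph with vertex set $U$ in which two distinct elements $u,u'$ are adjacent if and only if $u,u'$ lie in the same block of $\pi$ but in different blocks of $\sigma$. Define the partition $\sigma\Rightarrow\pi$ of $U$ as follows: for each block $B\in\pi$, if there is a block $C\in\sigma$ with $B\subseteq C$, then $B$ is replaced by the singletons $\{u\}$, $u\in B$; otherwise $B$ is kept as a single block. Then the partition of $U$ into the connected components of $G(\sigma\Rightarrow\pi)$ equals $\sigma\Rightarrow\pi$.
   Context: A partition of $U$ is a set of pairwise disjoint nonempty subsets of $U$ (blocks) whose union is $U$. The graph $G(\sigma\Rightarrow\pi)$ arises from labelling each edge $u-u'$ of the complete graph on $U$ with $T_\pi$ if $u,u'$ are in different blocks of $\pi$ and $F_\pi$ otherwise (similarly for $\sigma$) and keeping exactly the edges on which the Boolean conditional $\sigma\supset\pi$ of the two truth values is $F$, i.e. those labelled $T_\sigma,F_\pi$. *)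

theory Defs
  imports "HOL-Library.Disjoint_Sets"
begin

definition imp_adj :: "'a set set \<Rightarrow> 'a set set \<Rightarrow> 'a \<Rightarrow> 'a \<Rightarrow> bool" where
  "imp_adj \<sigma> \<pi> u u' \<longleftrightarrow> u \<noteq> u' \<and> (\<exists>B\<in>\<pi>. u \<in> B \<and> u' \<in> B) \<and> \<not> (\<exists>C\<in>\<sigma>. u \<in> C \<and> u' \<in> C)"

definition graph_components :: "'a set \<Rightarrow> ('a \<Rightarrow> 'a \<Rightarrow> bool) \<Rightarrow> 'a set set" where
  "graph_components U adj =
     {{v \<in> U. (\<lambda>x y. x \<in> U \<and> y \<in> U \<and> adj x y)\<^sup>*\<^sup>* u v} | u. u \<in> U}"

definition partition_imp :: "'a set set \<Rightarrow> 'a set set \<Rightarrow> 'a set set" where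
  "partition_imp \<sigma> \<pi> =
     {B \<in> \<pi>. \<not> (\<exists>C\<in>\<sigma>. B \<subseteq> C)} \<union>
     (\<Union>B \<in> {B \<in> \<pi>. \<exists>C\<in>\<sigma>. B \<subseteq> C}. (\<lambda>u. {u}) ` B)"

end

theory Submission
  imports Defs
begin

text \<open>An edge of G(sigma => pi) never leaves a block B of pi. If B lies inside a block of
sigma, no edge starts in B at all, so its points are isolated. Otherwise any two points u, v
of B are adjacent when they lie in different blocks of sigma, and otherwise both are adjacent
to a point w of B outside their common sigma-block.\<close>

definition graph_component :: "'a set \<Rightarrow> ('a \<Rightarrow> 'a \<Rightarrow> bool) \<Rightarrow> 'a \<Rightarrow> 'a set" where
  "graph_component U adj u = {v \<in> U. (\<lambda>x y. x \<in> U \<and> y \<in> U \<and> adj x y)\<^sup>*\<^sup>* u v}"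

lemma graph_components_eq_image: "graph_components U adj = graph_component U adj ` U"
  unfolding graph_components_def graph_component_def by blast

lemma graph_component_refl: "u \<in> U \<Longrightarrow> u \<in> graph_component U adj u"
  unfolding graph_component_def by simp

lemma graph_component_step:
  assumes "v \<in> graph_component U adj u" "w \<in> U" "adj v w"
  shows "w \<in> graph_component U adj u"
  using assms unfolding graph_component_def by (auto intro: rtranclp.rtrancl_into_rtrancl)

lemma graph_component_subset_closed:
  assumes "u \<in> S" and closed: "\<And>x y. x \<in> S \<Longrightarrow> adj x y \<Longrightarrow> y \<in> S"
  shows "graph_component U adj u \<subseteq> S"
proof
  fix v assume "v \<in> graph_component U adj u"
  then have "(\<lambda>x y. x \<in> U \<and> y \<in> U \<and> adj x y)\<^sup>*\<^sup>* u v"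
    unfolding graph_component_def by simp
  then show "v \<in> S"
    by (induction rule: rtranclp_induct) (use \<open>u \<in> S\<close> closed in blast)+
qed

lemma partition_on_block_unique:
  assumes "partition_on U P" "B \<in> P" "B' \<in> P" "u \<in> B" "u \<in> B'"
  shows "B = B'"
  using assms unfolding partition_on_def disjoint_def by blast

lemma imp_adj_stays_in_block:
  assumes "partition_on U \<pi>" "B \<in> \<pi>" "x \<in> B" "imp_adj \<sigma> \<pi> x y"
  shows "y \<in> B"
proof -
  obtain B' where "B' \<in> \<pi>" "x \<in> B'" "y \<in> B'" using assms(4) unfolding imp_adj_def by blast
  then show ?thesis using partition_on_block_unique[OF assms(1,2)] assms(3) by blast
qed

lemma partition_on_no_common_block:
  assumes "partition_on U \<sigma>" "C \<in> \<sigma>" "x \<in> C" "w \<notin> C"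
  shows "\<not> (\<exists>C'\<in>\<sigma>. x \<in> C' \<and> w \<in> C')"
  using assms partition_on_block_unique[OF \<open>partition_on U \<sigma>\<close> \<open>C \<in> \<sigma>\<close>] by blast

lemma imp_adj_block_connected:
  assumes \<pi>: "partition_on U \<pi>" and \<sigma>: "partition_on U \<sigma>"
    and B: "B \<in> \<pi>" "\<not> (\<exists>C\<in>\<sigma>. B \<subseteq> C)" and uv: "u \<in> B" "v \<in> B"
  shows "v \<in> graph_component U (imp_adj \<sigma> \<pi>) u"
proof -
  have BU: "B \<subseteq> U" using partition_onD1[OF \<pi>] B(1) by blast
  have adj: "imp_adj \<sigma> \<pi> x y"
    if "x \<in> B" "y \<in> B" "\<not> (\<exists>C\<in>\<sigma>. x \<in> C \<and> y \<in> C)" for x y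
  proof -
    obtain C where "C \<in> \<sigma>" "x \<in> C" using partition_onD1[OF \<sigma>] BU \<open>x \<in> B\<close> by blast
    then have "x \<noteq> y" using that(3) by blast
    then show ?thesis using that B(1) unfolding imp_adj_def by blast
  qed
  have u_comp: "u \<in> graph_component U (imp_adj \<sigma> \<pi>) u"
    using BU uv(1) by (intro graph_component_refl) blast
  show ?thesis
  proof (cases "\<exists>C\<in>\<sigma>. u \<in> C \<and> v \<in> C")
    case False
    then have "imp_adj \<sigma> \<pi> u v" using adj uv by blast
    with u_comp show ?thesis using BU uv(2) by (meson graph_component_step subsetD)
  next
    case True
    then obtain C where C: "C \<in> \<sigma>" "u \<in> C" "v \<in> C" by blast
    with B(2) obtain w where w: "w \<in> B" "w \<notin> C" by blast
    have "imp_adj \<sigma> \<pi> u w"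
      using adj[OF uv(1) w(1)] partition_on_no_common_block[OF \<sigma> C(1,2) w(2)] by blast
    with u_comp have "w \<in> graph_component U (imp_adj \<sigma> \<pi>) u"
      using BU w(1) by (meson graph_component_step subsetD)
    moreover have "imp_adj \<sigma> \<pi> w v"
      using adj[OF w(1) uv(2)] partition_on_no_common_block[OF \<sigma> C(1,3) w(2)] by blast
    ultimately show ?thesis using BU uv(2) by (meson graph_component_step subsetD)
  qed
qed

lemma imp_graph_component:
  assumes \<pi>: "partition_on U \<pi>" and \<sigma>: "partition_on U \<sigma>" and B: "B \<in> \<pi>" "u \<in> B"
  shows "graph_component U (imp_adj \<sigma> \<pi>) u = (if \<exists>C\<in>\<sigma>. B \<subseteq> C then {u} else B)"
proof (cases "\<exists>C\<in>\<sigma>. B \<subseteq> C")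
  case True
  then obtain C where "C \<in> \<sigma>" "B \<subseteq> C" by blast
  have isolated: "\<not> imp_adj \<sigma> \<pi> u y" for y
  proof
    assume "imp_adj \<sigma> \<pi> u y"
    moreover have "y \<in> B" using imp_adj_stays_in_block[OF \<pi> B calculation] .
    ultimately show False
      using \<open>C \<in> \<sigma>\<close> \<open>B \<subseteq> C\<close> B(2) unfolding imp_adj_def by blast
  qed
  have "u \<in> U" using partition_onD1[OF \<pi>] B by blast
  have "graph_component U (imp_adj \<sigma> \<pi>) u \<subseteq> {u}"
    using isolated by (intro graph_component_subset_closed) auto
  with graph_component_refl[OF \<open>u \<in> U\<close>] True show ?thesis by auto
next
  case False
  have "graph_component U (imp_adj \<sigma> \<pi>) u \<subseteq> B"
    using imp_adj_stays_in_block[OF \<pi> B(1)] B(2) by (intro graph_component_subset_closed)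
  with imp_adj_block_connected[OF \<pi> \<sigma> B(1) False B(2)] False show ?thesis by auto
qed

theorem mainTheorem3:
  fixes U :: "'a set" and \<pi> \<sigma> :: "'a set set"
  assumes "U \<noteq> {}"
    and "partition_on U \<pi>"
    and "partition_on U \<sigma>"
  shows "graph_components U (imp_adj \<sigma> \<pi>) = partition_imp \<sigma> \<pi>"
proof -
  let ?split = "\<lambda>B. \<exists>C\<in>\<sigma>. B \<subseteq> C"
  have block_image: "graph_component U (imp_adj \<sigma> \<pi>) ` B =
      (if ?split B then (\<lambda>u. {u}) ` B else {B})" if "B \<in> \<pi>" for B
  proof -
    have "B \<noteq> {}" using partition_onD3[OF assms(2)] that by blast
    with imp_graph_component[OF assms(2,3) that] show ?thesis by auto
  qed
  have "graph_components U (imp_adj \<sigma> \<pi>) = graph_component U (imp_adj \<sigma> \<pi>) ` \<Union>\<pi>"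
    by (simp add: graph_components_eq_image flip: partition_onD1[OF assms(2)])
  also have "\<dots> = (\<Union>B\<in>\<pi>. if ?split B then (\<lambda>u. {u}) ` B else {B})"
    by (simp add: image_Union block_image)
  also have "\<dots> = partition_imp \<sigma> \<pi>"
    unfolding partition_imp_def by auto
  finally show ?thesis .
qed

end
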